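(* Let $I=(N,O,\succsim)$ be a general instance, $p$ a generalized random matching and $p'$ its associated random matching for the associated instance $I'$. If $p'$ is claimwise weakly stable and $p$ is non-wasteful and individually rational (i.e., $p'$ respects non-wastefulness and individual rationality), then $p$ is claimwise weakly stable.
   Context: General instance: $N=\{1,\dots,n\}$ agents, $O=\{o_1,\dots,o_m\}$ objects ($m,n\ge1$ arbitrary), $\emptyset$ the null object; each agent $i$ has a weak order $\succsim_i$ over $O\cup\{\emptyset\}$, each object $o$ a weak order $\succsim_o$ over $N\cup\{\emptyset\}$, with either $o\succ_i\emptyset$ or $\emptyset\succ_i o$, and either $i\succ_o\emptyset$ or $\emptyset\succ_o i$. $(i,o)$ is acceptable if $o\succ_i\emptyset$ and $i\succ_o\emptyset$. A generalized random matching is an $n\times m$ nonnegative matrix with row and column sums $\le1$; write $p(\emptyset,o)=1-\sum_{i\in N}p(i,o)$. $p$ is individually rational if $p(i,o)=0$ whenever $\emptyset\succ_i o$ or $\emptyset\succ_o i$; non-wasteful if there is no acceptable $(i,o)$ with $\sum_{o':o'\succsim_i o}p(i,o')<1$ and $\sum_j p(j,o)<1$. $p$ is claimwise weakly stable if it is individually rational, non-wasteful, and for every acceptable pair $(i,o)$ and every $j\in N$ with $i\succ_o j$: $\sum_{o'\in O:o'\succsim_i o,\,o'\ne o}p(i,o')\ge p(j,o)+p(\emptyset,o)$. Associated instance: $D=\{d_1,\dots,d_m\}$, $\Phi=\{\phi_1,\dots,\phi_n\}$, $N'=N\cup D$, $O'=O\cup\Phi$, with weak orders (blocks best to worst, consecutive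 blocks strict): $i\in N$: objects acceptable to $i$ by $\succsim_i$, $\phi_i$, $\phi_k$ ($k\ne i$) in increasing index, objects unacceptable to $i$ by $\succsim_i$; $o_j$: agents acceptable to $o_j$ by $\succsim_{o_j}$, $d_j$, $d_k$ ($k\ne j$) in increasing index, agents unacceptable to $o_j$ by $\succsim_{o_j}$; $d_j$: $o_j$, other objects of $O$ in increasing index, then null objects with $\phi_k\succsim'_{d_j}\phi_l$ iff $k\succsim_{o_j}l$; $\phi_i$: $i$, other agents of $N$ in increasing index, then dummies with $d_k\succsim'_{\phi_i}d_l$ iff $o_k\succsim_i o_l$. Associated random matching: $p'(i,o_j)=p(i,o_j)$, $p'(d_j,\phi_i)=p(i,o_j)$, $p'(i,\phi_i)=1-\sum_o p(i,o)$, $p'(d_j,o_j)=1-\sum_i p(i,o_j)$, other entries $0$. A bistochastic matrix $q$ on $N'\times O'$ is claimwise weakly stable if for every $(a,c)\in N'\times O'$ and every $b\in N'$ with $a\succ'_c b$: $\sum_{c':c'\succsim'_a c,\,c'\neq c}q(a,c')\ge q(b,c)$. *)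

theory Defs
  imports Main "HOL-Analysis.Analysis"
begin

(* Agents are 0..<n, objects are 0..<m (index order = the paper's index order).
   The null object / null agent is None.
   pa i x y  means  x \<succeq>_i y   (x y :: nat option, None = null object)
   po j x y  means  x \<succeq>_{o_j} y (x y :: nat option, None = null agent) *)

definition weak_order_on :: "'a set \<Rightarrow> ('a \<Rightarrow> 'a \<Rightarrow> bool) \<Rightarrow> bool" where
  "weak_order_on S R \<longleftrightarrow> (\<forall>x\<in>S. \<forall>y\<in>S. R x y \<or> R y x) \<and>
     (\<forall>x\<in>S. \<forall>y\<in>S. \<forall>z\<in>S. R x y \<longrightarrow> R y z \<longrightarrow> R x z)"

definition strict :: "('a \<Rightarrow> 'a \<Rightarrow> bool) \<Rightarrow> 'a \<Rightarrow> 'a \<Rightarrow> bool" where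
  "strict R x y \<longleftrightarrow> R x y \<and> \<not> R y x"

definition general_instance ::
  "nat \<Rightarrow> nat \<Rightarrow> (nat \<Rightarrow> nat option \<Rightarrow> nat option \<Rightarrow> bool)
     \<Rightarrow> (nat \<Rightarrow> nat option \<Rightarrow> nat option \<Rightarrow> bool) \<Rightarrow> bool" where
  "general_instance n m pa po \<longleftrightarrow> n \<ge> 1 \<and> m \<ge> 1 \<and>
     (\<forall>i<n. weak_order_on (insert None (Some ` {..<m})) (pa i)) \<and>
     (\<forall>j<m. weak_order_on (insert None (Some ` {..<n})) (po j)) \<and>
     (\<forall>i<n. \<forall>j<m. strict (pa i) (Some j) None \<or> strict (pa i) None (Some j)) \<and>
     (\<forall>j<m. \<forall>i<n. strict (po j) (Some i) None \<or> strict (po j) None (Some i))"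

definition acceptable where
  "acceptable pa po i j \<longleftrightarrow> strict (pa i) (Some j) None \<and> strict (po j) (Some i) None"

definition gen_random_matching :: "nat \<Rightarrow> nat \<Rightarrow> (nat \<Rightarrow> nat \<Rightarrow> real) \<Rightarrow> bool" where
  "gen_random_matching n m p \<longleftrightarrow>
     (\<forall>i<n. \<forall>j<m. p i j \<ge> 0) \<and>
     (\<forall>i<n. (\<Sum>j<m. p i j) \<le> 1) \<and>
     (\<forall>j<m. (\<Sum>i<n. p i j) \<le> 1)"

definition null_share :: "nat \<Rightarrow> (nat \<Rightarrow> nat \<Rightarrow> real) \<Rightarrow> nat \<Rightarrow> real" where
  "null_share n p j = 1 - (\<Sum>i<n. p i j)"

definition indiv_rational where
  "indiv_rational n m pa po p \<longleftrightarrow>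
     (\<forall>i<n. \<forall>j<m. (strict (pa i) None (Some j) \<or> strict (po j) None (Some i)) \<longrightarrow> p i j = 0)"

definition non_wasteful where
  "non_wasteful n m pa po p \<longleftrightarrow>
     \<not> (\<exists>i<n. \<exists>j<m. acceptable pa po i j \<and>
          (\<Sum>j'\<in>{j'. j' < m \<and> pa i (Some j') (Some j)}. p i j') < 1 \<and>
          (\<Sum>k<n. p k j) < 1)"

definition claimwise_weakly_stable where
  "claimwise_weakly_stable n m pa po p \<longleftrightarrow>
     indiv_rational n m pa po p \<and> non_wasteful n m pa po p \<and>
     (\<forall>i<n. \<forall>j<m. acceptable pa po i j \<longrightarrow>
        (\<forall>k<n. strict (po j) (Some i) (Some k) \<longrightarrow>
           (\<Sum>j'\<in>{j'. j' < m \<and> pa i (Some j') (Some j) \<and> j' \<noteq> j}. p i j')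
             \<ge> p k j + null_share n p j))"

datatype agent' = Ag nat | Dm nat      (* Ag i = agent i, Dm j = dummy d_j *)
datatype object' = Ob nat | Nl nat     (* Ob j = object o_j, Nl i = null object phi_i *)

definition agents' :: "nat \<Rightarrow> nat \<Rightarrow> agent' set" where
  "agents' n m = Ag ` {..<n} \<union> Dm ` {..<m}"

definition objects' :: "nat \<Rightarrow> nat \<Rightarrow> object' set" where
  "objects' n m = Ob ` {..<m} \<union> Nl ` {..<n}"

(* block-based weak orders: blocks best (0) to worst; consecutive blocks strict *)

fun blkA :: "(nat \<Rightarrow> nat option \<Rightarrow> nat option \<Rightarrow> bool) \<Rightarrow> agent' \<Rightarrow> object' \<Rightarrow> nat" where
  "blkA pa (Ag i) (Ob j) = (if strict (pa i) (Some j) None then 0 else 3)"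
| "blkA pa (Ag i) (Nl k) = (if k = i then 1 else 2)"
| "blkA pa (Dm j) (Ob k) = (if k = j then 0 else 1)"
| "blkA pa (Dm j) (Nl k) = 2"

fun inA :: "(nat \<Rightarrow> nat option \<Rightarrow> nat option \<Rightarrow> bool) \<Rightarrow> (nat \<Rightarrow> nat option \<Rightarrow> nat option \<Rightarrow> bool)
     \<Rightarrow> agent' \<Rightarrow> object' \<Rightarrow> object' \<Rightarrow> bool" where
  "inA pa po (Ag i) (Ob j) (Ob j') = pa i (Some j) (Some j')"
| "inA pa po (Ag i) (Nl k) (Nl k') = (k \<le> k')"
| "inA pa po (Dm j) (Ob k) (Ob k') = (k \<le> k')"
| "inA pa po (Dm j) (Nl k) (Nl l) = po j (Some k) (Some l)"
| "inA pa po a c c' = True"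

(* prefA' pa po a c c'  means  c \<succeq>'_a c' *)
definition prefA' where
  "prefA' pa po a c c' \<longleftrightarrow> blkA pa a c < blkA pa a c' \<or>
     (blkA pa a c = blkA pa a c' \<and> inA pa po a c c')"

fun blkO :: "(nat \<Rightarrow> nat option \<Rightarrow> nat option \<Rightarrow> bool) \<Rightarrow> object' \<Rightarrow> agent' \<Rightarrow> nat" where
  "blkO po (Ob j) (Ag i) = (if strict (po j) (Some i) None then 0 else 3)"
| "blkO po (Ob j) (Dm k) = (if k = j then 1 else 2)"
| "blkO po (Nl i) (Ag k) = (if k = i then 0 else 1)"
| "blkO po (Nl i) (Dm k) = 2"

fun inO :: "(nat \<Rightarrow> nat option \<Rightarrow> nat option \<Rightarrow> bool) \<Rightarrow> (nat \<Rightarrow> nat option \<Rightarrow> nat option \<Rightarrow> bool)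
     \<Rightarrow> object' \<Rightarrow> agent' \<Rightarrow> agent' \<Rightarrow> bool" where
  "inO pa po (Ob j) (Ag i) (Ag i') = po j (Some i) (Some i')"
| "inO pa po (Ob j) (Dm k) (Dm k') = (k \<le> k')"
| "inO pa po (Nl i) (Ag k) (Ag k') = (k \<le> k')"
| "inO pa po (Nl i) (Dm k) (Dm l) = pa i (Some k) (Some l)"
| "inO pa po c a a' = True"

(* prefO' pa po c a b  means  a \<succeq>'_c b *)
definition prefO' where
  "prefO' pa po c a b \<longleftrightarrow> blkO po c a < blkO po c b \<or>
     (blkO po c a = blkO po c b \<and> inO pa po c a b)"

fun assoc_matching :: "nat \<Rightarrow> nat \<Rightarrow> (nat \<Rightarrow> nat \<Rightarrow> real) \<Rightarrow> agent' \<Rightarrow> object' \<Rightarrow> real" where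
  "assoc_matching n m p (Ag i) (Ob j) = p i j"
| "assoc_matching n m p (Dm j) (Nl i) = p i j"
| "assoc_matching n m p (Ag i) (Nl k) = (if k = i then 1 - (\<Sum>j<m. p i j) else 0)"
| "assoc_matching n m p (Dm j) (Ob k) = (if k = j then 1 - (\<Sum>i<n. p i j) else 0)"

definition bistochastic :: "agent' set \<Rightarrow> object' set \<Rightarrow> (agent' \<Rightarrow> object' \<Rightarrow> real) \<Rightarrow> bool" where
  "bistochastic A C q \<longleftrightarrow> (\<forall>a\<in>A. \<forall>c\<in>C. q a c \<ge> 0) \<and>
     (\<forall>a\<in>A. (\<Sum>c\<in>C. q a c) = 1) \<and> (\<forall>c\<in>C. (\<Sum>a\<in>A. q a c) = 1)"

definition claimwise_weakly_stable' where
  "claimwise_weakly_stable' n m pa po q \<longleftrightarrow>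
     bistochastic (agents' n m) (objects' n m) q \<and>
     (\<forall>a\<in>agents' n m. \<forall>c\<in>objects' n m. \<forall>b\<in>agents' n m.
        strict (prefO' pa po c) a b \<longrightarrow>
        (\<Sum>c'\<in>{c' \<in> objects' n m. prefA' pa po a c' c \<and> c' \<noteq> c}. q a c') \<ge> q b c)"

end

theory Submission
  imports Defs
begin

text \<open>Fix an acceptable pair (i, o) and an agent k ranked below i by o, and let s be the
  probability i receives from objects it weakly prefers to o, o excluded.
  If o is not fully assigned, non-wastefulness gives p(i,o) + s \<ge> 1, while the column of o
  gives p(i,o) + p(k,o) + p(\<emptyset>,o) \<le> 1.
  If o is fully assigned, p(\<emptyset>,o) \<le> 0, and claimwise stability of p' at (i, o) against k
  gives s \<ge> p(k,o): the objects i strictly prefers to o in the associated instance are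
  exactly the acceptable objects it weakly prefers to o, and p' agrees with p on them.\<close>

lemma add_le_sum_of_distinct:
  fixes f :: "'a \<Rightarrow> 'b::ordered_comm_monoid_add"
  assumes "finite A" "a \<in> A" "b \<in> A" "a \<noteq> b" "\<forall>x\<in>A. 0 \<le> f x"
  shows "f a + f b \<le> sum f A"
proof -
  have "f a + f b = sum f {a, b}"
    using assms(4) by simp
  also have "\<dots> \<le> sum f A"
    using assms by (intro sum_mono2) auto
  finally show ?thesis .
qed

lemma gen_random_matching_nonneg:
  "gen_random_matching n m p \<Longrightarrow> i < n \<Longrightarrow> j < m \<Longrightarrow> 0 \<le> p i j"
  by (simp add: gen_random_matching_def)

lemma non_wasteful_claim_bound:
  assumes inst: "general_instance n m pa po"
    and p: "gen_random_matching n m p"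
    and nw: "non_wasteful n m pa po p"
    and i: "i < n" and j: "j < m" and k: "k < n" and "i \<noteq> k"
    and acc: "acceptable pa po i j"
    and unsaturated: "(\<Sum>l<n. p l j) < 1"
  shows "p k j + null_share n p j
           \<le> (\<Sum>j'\<in>{j'. j' < m \<and> pa i (Some j') (Some j) \<and> j' \<noteq> j}. p i j')"
    (is "_ \<le> sum _ ?S")
proof -
  have "pa i (Some j) (Some j)"
    using inst i j unfolding general_instance_def weak_order_on_def by blast
  then have "{j'. j' < m \<and> pa i (Some j') (Some j)} = insert j ?S"
    using j by auto
  moreover have "\<not> (\<Sum>j'\<in>{j'. j' < m \<and> pa i (Some j') (Some j)}. p i j') < 1"
    using nw i j acc unsaturated unfolding non_wasteful_def by blast
  moreover have "finite ?S"
    by simp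
  ultimately have "1 \<le> p i j + sum (p i) ?S"
    by simp
  moreover have "p i j + p k j \<le> (\<Sum>l<n. p l j)"
    using i k \<open>i \<noteq> k\<close> gen_random_matching_nonneg[OF p _ j]
    by (intro add_le_sum_of_distinct) auto
  ultimately show ?thesis
    unfolding null_share_def by linarith
qed

lemma prefO'_object_strict_agents:
  assumes "acceptable pa po i j" "strict (po j) (Some i) (Some k)"
  shows "strict (prefO' pa po (Ob j)) (Ag i) (Ag k)"
  using assms unfolding strict_def prefO'_def acceptable_def by (auto simp: strict_def)

lemma prefA'_strictly_better_objects:
  assumes "acceptable pa po i j"
  shows "{c \<in> objects' n m. prefA' pa po (Ag i) c (Ob j) \<and> c \<noteq> Ob j}
           = Ob ` {j'. j' < m \<and> strict (pa i) (Some j') None \<and> pa i (Some j') (Some j) \<and> j' \<noteq> j}"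
  using assms unfolding objects'_def prefA'_def acceptable_def
  by (auto split: if_splits)

lemma assoc_stable_claim_bound:
  assumes p: "gen_random_matching n m p"
    and stable: "claimwise_weakly_stable' n m pa po (assoc_matching n m p)"
    and i: "i < n" and j: "j < m" and k: "k < n"
    and acc: "acceptable pa po i j" and ik: "strict (po j) (Some i) (Some k)"
  shows "p k j \<le> (\<Sum>j'\<in>{j'. j' < m \<and> pa i (Some j') (Some j) \<and> j' \<noteq> j}. p i j')"
proof -
  let ?T = "{j'. j' < m \<and> strict (pa i) (Some j') None \<and> pa i (Some j') (Some j) \<and> j' \<noteq> j}"
  have "assoc_matching n m p (Ag k) (Ob j)
          \<le> (\<Sum>c\<in>{c \<in> objects' n m. prefA' pa po (Ag i) c (Ob j) \<and> c \<noteq> Ob j}.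
               assoc_matching n m p (Ag i) c)"
    using stable prefO'_object_strict_agents[OF acc ik] i j k
    unfolding claimwise_weakly_stable'_def agents'_def objects'_def by blast
  also have "\<dots> = sum (p i) ?T"
    unfolding prefA'_strictly_better_objects[OF acc] by (subst sum.reindex) (auto simp: inj_on_def)
  also have "\<dots> \<le> (\<Sum>j'\<in>{j'. j' < m \<and> pa i (Some j') (Some j) \<and> j' \<noteq> j}. p i j')"
    using gen_random_matching_nonneg[OF p i] by (intro sum_mono2) auto
  finally show ?thesis
    by simp
qed

theorem proposition30:
  fixes n m :: nat
    and pa po :: "nat \<Rightarrow> nat option \<Rightarrow> nat option \<Rightarrow> bool"
    and p :: "nat \<Rightarrow> nat \<Rightarrow> real"
  assumes "general_instance n m pa po"
    and "gen_random_matching n m p"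
    and "claimwise_weakly_stable' n m pa po (assoc_matching n m p)"
    and "non_wasteful n m pa po p"
    and "indiv_rational n m pa po p"
  shows "claimwise_weakly_stable n m pa po p"
  unfolding claimwise_weakly_stable_def
proof (intro conjI assms(4,5) allI impI)
  fix i j k
  assume i: "i < n" and j: "j < m" and acc: "acceptable pa po i j" and k: "k < n"
    and ik: "strict (po j) (Some i) (Some k)"
  show "(\<Sum>j'\<in>{j'. j' < m \<and> pa i (Some j') (Some j) \<and> j' \<noteq> j}. p i j')
          \<ge> p k j + null_share n p j"
  proof (cases "(\<Sum>l<n. p l j) < 1")
    case True
    have "i \<noteq> k"
      using ik unfolding strict_def by auto
    with True show ?thesis
      using non_wasteful_claim_bound assms(1,2,4) i j k acc by blast
  next
    case False
    then show ?thesis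
      using assoc_stable_claim_bound[OF assms(2,3) i j k acc ik]
      unfolding null_share_def by linarith
  qed
qed

end
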